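(* Let $m\ge6$ be even, $t=m/2$, and $s$ an integer with $2\le s\le 2^{t-1}$. Let $E_1,\dots,E_\alpha$ be a partial spread in $\mathbb{F}_2^m$ and $A,B\subseteq\{1,\dots,\alpha\}$ with $|A|=|B|=s$ and $|A\cap B|=1$. Let $f=\sum_{i\in A}f_i$, $g=\sum_{i\in B}f_i$, and $F=\{f,g,f+g\}$. Then for every $\mathbf{h}\in\mathbb{F}_2^m$ and all $f_1,f_2\in F$ with $f_1\neq f_2$, \[\widehat{f_1}(\mathbf{0})+\widehat{f_2}(\mathbf{h})-\widehat{f_1+f_2}(\mathbf{h})\neq 2^m.\]
   Context: A partial spread in $\mathbb{F}_2^m$ ($m=2t$) is a set of subspaces $E_1,\dots,E_\alpha$ of $\mathbb{F}_2^m$, each of dimension $t$, with $E_i\cap E_j=\{\mathbf{0}\}$ for $i\ne j$. $f_i:\mathbb{F}_2^m\to\mathbb{F}_2$ is the indicator function of $E_i\setminus\{\mathbf{0}\}$; sums of Boolean functions are mod 2. For a Boolean function $h$, $\widehat{h}(\mathbf{w})=\sum_{\mathbf{x}\in\mathbb{F}_2^m}(-1)^{h(\mathbf{x})+\mathbf{w}\cdot\mathbf{x}}$ with the standard inner product. *)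

theory Defs
  imports "HOL-Analysis.Analysis" "HOL-Library.Z2"
begin

text \<open>Vectors of F_2^m are modelled as bit^'n with CARD('n) = m;
  subspaces/dimension are those of the F_2-vector space bit^'n.\<close>

definition inner2 :: "bit^'n \<Rightarrow> bit^'n \<Rightarrow> bit" where
  "inner2 w x = (\<Sum>i\<in>UNIV. w $ i * x $ i)"

definition sgn2 :: "bit \<Rightarrow> int" where
  "sgn2 b = (if b = 0 then 1 else -1)"

definition walsh :: "(bit^'n \<Rightarrow> bit) \<Rightarrow> bit^'n \<Rightarrow> int" where
  "walsh h w = (\<Sum>x\<in>UNIV. sgn2 (h x + inner2 w x))"

definition partial_spread :: "nat \<Rightarrow> nat \<Rightarrow> (nat \<Rightarrow> (bit^'n) set) \<Rightarrow> bool" where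
  "partial_spread t \<alpha> E \<longleftrightarrow>
     (\<forall>i\<in>{1..\<alpha>}. vec.subspace (E i) \<and> vec.dim (E i) = t) \<and>
     (\<forall>i\<in>{1..\<alpha>}. \<forall>j\<in>{1..\<alpha>}. i \<noteq> j \<longrightarrow> E i \<inter> E j = {0})"

definition spread_ind :: "(bit^'n) set \<Rightarrow> bit^'n \<Rightarrow> bit" where
  "spread_ind S x = (if x \<in> S - {0} then 1 else 0)"

end

theory Submission
  imports Defs
begin

text \<open>Write the combination as a sum over x of
  sgn(f1 x) + sgn(f2 x + h\<cdot>x) - sgn(f1 x + f2 x + h\<cdot>x). Every term is at most 1, so the
  combination equals 2^m only if every term is 1, which forces h\<cdot>x = 1 at every x with
  f1 x = f2 x = 1. Any two distinct functions of F are both 1 on the nonzero points of a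
  common spread element E_i (one in A \<inter> B, A - B or B - A), and a linear functional cannot be
  1 on all nonzero vectors of a subspace of dimension t \<ge> 2, because it is additive.\<close>

lemma card_bitvec: "CARD(bit^'n) = 2 ^ CARD('n)"
proof -
  have "(UNIV :: bit set) = {0, 1}" by auto
  then have "CARD(bit) = 2" by (metis card_2_iff zero_neq_one)
  then show ?thesis by (simp only: CARD_vec)
qed

lemma finite_bitvec: "finite (UNIV :: (bit^'n) set)"
  by (rule card_ge_0_finite) (simp only: card_bitvec zero_less_numeral zero_less_power)

lemma inner2_zero_left [simp]: "inner2 0 x = 0"
  by (simp add: inner2_def)

lemma inner2_add_right: "inner2 h (x + y) = inner2 h x + inner2 h y"
  unfolding inner2_def by (simp only: vector_add_component distrib_left sum.distrib)

lemma inner2_eq_1_if_walsh_combination_eq: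
  fixes a b :: "bit^'n \<Rightarrow> bit"
  assumes "walsh a 0 + walsh b h - walsh (\<lambda>x. a x + b x) h = 2 ^ CARD('n)"
    and "a x = 1" and "b x = 1"
  shows "inner2 h x = 1"
proof (rule ccontr)
  assume "inner2 h x \<noteq> 1"
  define T where "T y = sgn2 (a y) + sgn2 (b y + inner2 h y) - sgn2 (a y + b y + inner2 h y)" for y
  have "sum T UNIV = walsh a 0 + walsh b h - walsh (\<lambda>x. a x + b x) h"
    unfolding T_def walsh_def
    by (simp only: inner2_zero_left add_0_right sum.distrib sum_subtractf add.assoc)
  moreover have "sum T UNIV < sum (\<lambda>_. 1) (UNIV :: (bit^'n) set)"
  proof (rule sum_strict_mono_ex1[OF finite_bitvec])
    show "\<forall>y\<in>UNIV. T y \<le> 1"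
      unfolding T_def sgn2_def by (intro ballI, cases "a y"; cases "b y"; cases "inner2 h y") simp_all
    show "\<exists>y\<in>UNIV. T y < 1"
      using \<open>inner2 h x \<noteq> 1\<close> assms(2,3) unfolding T_def sgn2_def by auto
  qed
  ultimately show False
    using assms(1) by (simp add: card_bitvec del: CARD_vec)
qed

lemma ex_nonzero_inner2_ne_1:
  fixes S :: "(bit^'n) set"
  assumes "vec.subspace S" and "vec.dim S \<ge> 2"
  shows "\<exists>x\<in>S - {0}. inner2 h x \<noteq> 1"
proof -
  have not_in_span: "\<not> S \<subseteq> vec.span X" if "finite X" "card X < 2" for X
  proof
    assume "S \<subseteq> vec.span X"
    then have "vec.dim S \<le> card X"
      using that(1) by (rule vec.dim_le_card)
    with that(2) assms(2) show False by linarith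
  qed
  obtain x where "x \<in> S" "x \<noteq> 0"
    using not_in_span[of "{}"] by (auto simp: vec.span_empty)
  obtain y where "y \<in> S" "y \<notin> vec.span {x}"
    using not_in_span[of "{x}"] by auto
  then have "y \<noteq> 0" "y \<noteq> x"
    using vec.span_zero vec.span_base[of x "{x}"] by auto
  have "x + y \<in> S"
    using assms(1) \<open>x \<in> S\<close> \<open>y \<in> S\<close> by (rule vec.subspace_add)
  moreover have "x + y \<noteq> 0"
  proof
    assume "x + y = 0"
    then have "x = - y" by (simp add: eq_neg_iff_add_eq_0)
    also have "- y = y" by (simp add: vec_eq_iff)
    finally show False using \<open>y \<noteq> x\<close> by simp
  qed
  moreover have "inner2 h (x + y) \<noteq> 1" if "inner2 h x = 1" "inner2 h y = 1"
    using that by (simp add: inner2_add_right)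
  ultimately show ?thesis
    using \<open>x \<in> S\<close> \<open>x \<noteq> 0\<close> \<open>y \<in> S\<close> \<open>y \<noteq> 0\<close> by blast
qed

lemma walsh_combination_ne_if_one_on_subspace:
  fixes p q :: "bit^'n \<Rightarrow> bit"
  assumes "vec.subspace S" and "vec.dim S \<ge> 2"
    and "\<forall>x\<in>S - {0}. p x = 1 \<and> q x = 1"
  shows "walsh p 0 + walsh q h - walsh (\<lambda>x. p x + q x) h \<noteq> 2 ^ CARD('n)"
proof
  assume "walsh p 0 + walsh q h - walsh (\<lambda>x. p x + q x) h = 2 ^ CARD('n)"
  note inner2_eq_1_if_walsh_combination_eq[OF this]
  moreover obtain x where "x \<in> S - {0}" "inner2 h x \<noteq> 1"
    using ex_nonzero_inner2_ne_1[OF assms(1,2)] by blast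
  ultimately show False
    using assms(3) by blast
qed

lemma sum_spread_ind_on_element:
  assumes "partial_spread t \<alpha> E" and "A \<subseteq> {1..\<alpha>}" and "i \<in> {1..\<alpha>}"
    and "x \<in> E i - {0}"
  shows "(\<Sum>j\<in>A. spread_ind (E j) x) = (if i \<in> A then 1 else 0)"
proof -
  have "spread_ind (E j) x = (if j = i then 1 else 0)" if "j \<in> A" for j
  proof (cases "j = i")
    case False
    then have "E i \<inter> E j = {0}"
      using assms(1-3) that unfolding partial_spread_def by blast
    with False show ?thesis
      using assms(4) by (auto simp: spread_ind_def)
  qed (use assms(4) in \<open>simp add: spread_ind_def\<close>)
  then have "(\<Sum>j\<in>A. spread_ind (E j) x) = (\<Sum>j\<in>A. if j = i then 1 else 0)"
    by (rule sum.cong[OF refl])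
  also have "\<dots> = (if i \<in> A then 1 else 0)"
    using finite_subset[OF assms(2)] by (simp add: sum.delta')
  finally show ?thesis .
qed

lemma spread_element_where_both_one:
  assumes "partial_spread t \<alpha> E" and "A \<subseteq> {1..\<alpha>}" and "B \<subseteq> {1..\<alpha>}"
    and "A \<inter> B \<noteq> {}" and "A - B \<noteq> {}" and "B - A \<noteq> {}"
    and "f = (\<lambda>x. \<Sum>i\<in>A. spread_ind (E i) x)" and "g = (\<lambda>x. \<Sum>i\<in>B. spread_ind (E i) x)"
    and "p \<in> {f, g, \<lambda>x. f x + g x}" and "q \<in> {f, g, \<lambda>x. f x + g x}" and "p \<noteq> q"
  shows "\<exists>i\<in>{1..\<alpha>}. \<forall>x\<in>E i - {0}. p x = 1 \<and> q x = 1"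
proof -
  have on_element: "f x = (if i \<in> A then 1 else 0)" "g x = (if i \<in> B then 1 else 0)"
    if "i \<in> {1..\<alpha>}" "x \<in> E i - {0}" for i x
    using sum_spread_ind_on_element[OF assms(1) _ that] assms(2,3,7,8) by simp_all
  obtain c a b where "c \<in> A \<inter> B" "a \<in> A - B" "b \<in> B - A"
    using assms(4-6) by blast
  moreover have "c \<in> {1..\<alpha>}" "a \<in> {1..\<alpha>}" "b \<in> {1..\<alpha>}"
    using calculation assms(2,3) by auto
  ultimately have "\<forall>x\<in>E c - {0}. f x = 1 \<and> g x = 1"
    and "\<forall>x\<in>E a - {0}. f x = 1 \<and> f x + g x = 1"
    and "\<forall>x\<in>E b - {0}. g x = 1 \<and> f x + g x = 1"
    using on_element by auto
  moreover have "{p, q} = {f, g} \<or> {p, q} = {f, \<lambda>x. f x + g x} \<or> {p, q} = {g, \<lambda>x. f x + g x}"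
    using assms(9-11) by blast
  ultimately show ?thesis
    using \<open>c \<in> {1..\<alpha>}\<close> \<open>a \<in> {1..\<alpha>}\<close> \<open>b \<in> {1..\<alpha>}\<close>
    by (auto simp: doubleton_eq_iff simp del: add_bit_eq_xor)
qed

theorem lemma5:
  fixes m t s \<alpha> :: nat and E :: "nat \<Rightarrow> (bit^'n) set" and A B :: "nat set"
  assumes "CARD('n) = m" and "m \<ge> 6" and "even m" and "t = m div 2"
    and "2 \<le> s" and "s \<le> 2 ^ (t - 1)"
    and "partial_spread t \<alpha> E"
    and "A \<subseteq> {1..\<alpha>}" and "B \<subseteq> {1..\<alpha>}"
    and "card A = s" and "card B = s" and "card (A \<inter> B) = 1"
  shows "let f = (\<lambda>x. \<Sum>i\<in>A. spread_ind (E i) x);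
             g = (\<lambda>x. \<Sum>i\<in>B. spread_ind (E i) x);
             F = {f, g, (\<lambda>x. f x + g x)}
         in \<forall>h :: bit^'n. \<forall>f1\<in>F. \<forall>f2\<in>F. f1 \<noteq> f2 \<longrightarrow>
              walsh f1 0 + walsh f2 h - walsh (\<lambda>x. f1 x + f2 x) h \<noteq> 2 ^ m"
proof -
  define f where "f = (\<lambda>x. \<Sum>i\<in>A. spread_ind (E i) x)"
  define g where "g = (\<lambda>x. \<Sum>i\<in>B. spread_ind (E i) x)"
  have "A \<inter> B \<noteq> {}"
    using assms(12) by auto
  moreover have "A - B \<noteq> {}" "B - A \<noteq> {}"
    using assms(5,10-12) Int_absorb1[of B A] Int_absorb2[of A B] by auto
  ultimately have both_one: "\<exists>i\<in>{1..\<alpha>}. \<forall>x\<in>E i - {0}. p x = 1 \<and> q x = 1"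
    if "p \<in> {f, g, \<lambda>x. f x + g x}" "q \<in> {f, g, \<lambda>x. f x + g x}" "p \<noteq> q" for p q
    using spread_element_where_both_one[OF assms(7-9) _ _ _ f_def g_def that] by blast
  have element: "vec.subspace (E i)" "vec.dim (E i) \<ge> 2" if "i \<in> {1..\<alpha>}" for i
    using assms(2,4,7) that unfolding partial_spread_def by auto
  show ?thesis
    unfolding Let_def f_def[symmetric] g_def[symmetric]
  proof (intro allI ballI impI)
    fix h p q
    assume "p \<in> {f, g, \<lambda>x. f x + g x}" "q \<in> {f, g, \<lambda>x. f x + g x}" "p \<noteq> q"
    from both_one[OF this] obtain i
      where i: "i \<in> {1..\<alpha>}" and "\<forall>x\<in>E i - {0}. p x = 1 \<and> q x = 1" ..
    then have "walsh p 0 + walsh q h - walsh (\<lambda>x. p x + q x) h \<noteq> 2 ^ CARD('n)"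
      using walsh_combination_ne_if_one_on_subspace element[OF i] by blast
    then show "walsh p 0 + walsh q h - walsh (\<lambda>x. p x + q x) h \<noteq> 2 ^ m"
      using assms(1) by simp
  qed
qed

end
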